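(* Let $G$ be a simple loopless graph on $[L]$, $p\ge1$, and let $\Phi_p:\Pi_{2p}(G)\to[\mathcal{T}(G)]^{2p}$ be the map defined recursively below. For $(\pi,\phi)\in\Pi_{2p}(G)$ and $w=\Phi_p(\pi,\phi)=(w_1,\dots,w_{2p})$ (with $w_0:=e$), for every block $\{s,r\}\in\pi$ with $s<r$ we have \[ |w_s|=|w_{s-1}|+1\quad\text{and}\quad |w_r|=|w_{r-1}|-1. \]
   Context: $\mathcal{T}(G)=\langle v\in[L]: uv=vu \text{ for } (u,v)\in E(G)\rangle$ is the trace monoid of $G$ (words in letters $[L]$ modulo commutation of adjacent letters), $e$ the empty word, $|w|$ the length of a word. $P_2(2p)$ is the set of pair partitions of $[2p]$; blocks $\{u_1,v_1\},\{u_2,v_2\}$ cross if $u_1<u_2<v_1<v_2$; $F_\pi$ is the graph on the blocks of $\pi$ with edges between crossing blocks. $\Pi_{2p}(G)=\{(\pi,\phi):\pi\in P_2(2p),\ \phi\in\operatorname{Hom}(F_\pi,G)\}$, where $\phi$ maps blocks to $[L]$ and crossing blocks to adjacent vertices. Definition of $\Phi_p$: (1) For $p=1$, $P_2(2)=\{\{\{1,2\}\}\}$; if $\phi$ assigns label $i$ to the block, $\Phi_1(\pi,\phi)=(i,e)$. (2) Given $\Phi_p$ and $(\pi,\phi)\in\Pi_{2(p+1)}(G)$, let $r$ be the smallest index in $[2(p+1)]$ that is the larger element of its block, let $U=\{s,r\}\in\pi$ with $s<r$, $i_s=\phi(U)$, $\sigma=\pi\setminus\{U\}$, $\psi=\phi|_\sigma$.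 Identify $P_2([2(p+1)]\setminus\{s,r\})$ with $P_2(2p)$ via the order-preserving bijection $[2(p+1)]\setminus\{s,r\}\to[2p]$, and write $u=\Phi_p(\sigma,\psi)=(u_k)_{k\in[2(p+1)]\setminus\{s,r\}}$; for an index $k$ let $u_{k^-}$ denote $u_j$ for the largest $j<k$ with $j\notin\{s,r\}$, and $u_{k^-}=e$ if no such $j\ge1$ exists. Then $\Phi_{p+1}(\pi,\phi)_k=u_k$ for $k<s$; $=i_s u_{s^-}$ for $k=s$; $=i_su_k$ for $s<k<r$; $=u_{r^-}$ for $k=r$; $=u_k$ for $k>r$ (products taken in $\mathcal{T}(G)$). *)

theory Defs
  imports Main
begin

definition simple_graph_on :: "nat \<Rightarrow> (nat \<Rightarrow> nat \<Rightarrow> bool) \<Rightarrow> bool" where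
  "simple_graph_on L E \<longleftrightarrow>
     (\<forall>a b. E a b \<longrightarrow> E b a) \<and> (\<forall>a. \<not> E a a) \<and>
     (\<forall>a b. E a b \<longrightarrow> a \<in> {1..L} \<and> b \<in> {1..L})"

type_synonym trace = "nat list set"

definition tswap :: "(nat \<Rightarrow> nat \<Rightarrow> bool) \<Rightarrow> nat list \<Rightarrow> nat list \<Rightarrow> bool" where
  "tswap E u v \<longleftrightarrow> (\<exists>x y a b. u = x @ [a, b] @ y \<and> v = x @ [b, a] @ y \<and> E a b)"

definition tequiv :: "(nat \<Rightarrow> nat \<Rightarrow> bool) \<Rightarrow> nat list \<Rightarrow> nat list \<Rightarrow> bool" where
  "tequiv E = equivclp (tswap E)"

definition tclass :: "(nat \<Rightarrow> nat \<Rightarrow> bool) \<Rightarrow> nat list \<Rightarrow> trace" where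
  "tclass E w = {v. tequiv E w v}"

definition tempty :: "(nat \<Rightarrow> nat \<Rightarrow> bool) \<Rightarrow> trace" where
  "tempty E = tclass E []"

definition tletter :: "(nat \<Rightarrow> nat \<Rightarrow> bool) \<Rightarrow> nat \<Rightarrow> trace" where
  "tletter E i = tclass E [i]"

definition tmul :: "(nat \<Rightarrow> nat \<Rightarrow> bool) \<Rightarrow> trace \<Rightarrow> trace \<Rightarrow> trace" where
  "tmul E A B = tclass E ((SOME a. a \<in> A) @ (SOME b. b \<in> B))"

definition tlen :: "trace \<Rightarrow> nat" where
  "tlen A = length (SOME w. w \<in> A)"

definition pair_partition :: "nat set \<Rightarrow> (nat \<times> nat) set \<Rightarrow> bool" where
  "pair_partition S \<pi> \<longleftrightarrow>
     (\<forall>(s, r) \<in> \<pi>. s < r \<and> s \<in> S \<and> r \<in> S) \<and>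
     (\<forall>k \<in> S. \<exists>!b \<in> \<pi>. k = fst b \<or> k = snd b)"

definition crosses :: "nat \<times> nat \<Rightarrow> nat \<times> nat \<Rightarrow> bool" where
  "crosses b c \<longleftrightarrow>
     (fst b < fst c \<and> fst c < snd b \<and> snd b < snd c) \<or>
     (fst c < fst b \<and> fst b < snd c \<and> snd c < snd b)"

definition is_hom :: "nat \<Rightarrow> (nat \<Rightarrow> nat \<Rightarrow> bool) \<Rightarrow> (nat \<times> nat) set \<Rightarrow> (nat \<times> nat \<Rightarrow> nat) \<Rightarrow> bool" where
  "is_hom L E \<pi> \<phi> \<longleftrightarrow>
     (\<forall>b \<in> \<pi>. \<phi> b \<in> {1..L}) \<and> (\<forall>b \<in> \<pi>. \<forall>c \<in> \<pi>. crosses b c \<longrightarrow> E (\<phi> b) (\<phi> c))"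

definition Pi_set :: "nat \<Rightarrow> (nat \<Rightarrow> nat \<Rightarrow> bool) \<Rightarrow> nat \<Rightarrow> ((nat \<times> nat) set \<times> (nat \<times> nat \<Rightarrow> nat)) set" where
  "Pi_set L E p = {(\<pi>, \<phi>). pair_partition {1..2*p} \<pi> \<and> is_hom L E \<pi> \<phi>}"

text \<open>Defined on pair partitions of an arbitrary finite set of indices; the indices
  of the sub-partition are kept as they are (this realises the order-preserving
  identification with [2p] used in the paper).\<close>

primrec Phi_aux :: "(nat \<Rightarrow> nat \<Rightarrow> bool) \<Rightarrow> nat \<Rightarrow> (nat \<times> nat) set \<Rightarrow> (nat \<times> nat \<Rightarrow> nat) \<Rightarrow> nat \<Rightarrow> trace" where
  "Phi_aux E 0 \<pi> \<phi> = (\<lambda>k. tempty E)"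
| "Phi_aux E (Suc n) \<pi> \<phi> =
     (let r = Min {r. \<exists>s. (s, r) \<in> \<pi>};
          s = (THE s. (s, r) \<in> \<pi>);
          i = \<phi> (s, r);
          \<sigma> = \<pi> - {(s, r)};
          u = Phi_aux E n \<sigma> \<phi>;
          idx = fst ` \<sigma> \<union> snd ` \<sigma>;
          pred = (\<lambda>k. if (\<exists>j \<in> idx. j < k) then u (Max {j \<in> idx. j < k}) else tempty E)
      in (\<lambda>k. if k < s then u k
              else if k = s then tmul E (tletter E i) (pred s)
              else if k < r then tmul E (tletter E i) (u k)
              else if k = r then pred r
              else u k))"

definition Phi :: "(nat \<Rightarrow> nat \<Rightarrow> bool) \<Rightarrow> (nat \<times> nat) set \<Rightarrow> (nat \<times> nat \<Rightarrow> nat) \<Rightarrow> nat \<Rightarrow> trace" where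
  "Phi E \<pi> \<phi> = Phi_aux E (card \<pi>) \<pi> \<phi>"

end

theory Submission
  imports Defs
begin

text \<open>The length of the \<open>k\<close>-th entry of \<open>\<Phi>(\<pi>, \<phi>)\<close> is the depth of \<open>\<pi>\<close> at \<open>k\<close>, the number of
  blocks \<open>{s, r}\<close> with \<open>s \<le> k < r\<close>.  In the recursive step the removed block contributes one
  letter exactly at the positions \<open>s, \<dots>, r - 1\<close>, while \<open>u\<^sub>s\<^sub>-\<close> and \<open>u\<^sub>r\<^sub>-\<close> have the depth of the
  smaller partition at the nearest index to the left, which is its depth at \<open>s\<close> resp. \<open>r\<close>
  because no block ends or begins in between.  Since no other block begins or ends at \<open>s\<close>
  or \<open>r\<close>, the depth rises by one at \<open>s\<close> and drops by one at \<open>r\<close>.  Neither the labels nor the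
  commutation relations affect lengths.\<close>

lemma tequiv_length: "tequiv E u v \<Longrightarrow> length u = length v"
  unfolding tequiv_def
proof (induction rule: equivclp_induct)
  case base
  then show ?case by simp
next
  case (step v w)
  then show ?case by (auto simp: tswap_def)
qed

lemma tlen_tclass [simp]: "tlen (tclass E w) = length w"
proof -
  have "w \<in> tclass E w" by (simp add: tclass_def tequiv_def)
  then have "(SOME v. v \<in> tclass E w) \<in> tclass E w" by (rule someI)
  then show ?thesis unfolding tlen_def tclass_def by (auto dest: tequiv_length)
qed

lemma tlen_tmul [simp]: "tlen (tmul E A B) = tlen A + tlen B"
  unfolding tmul_def tlen_tclass by (simp add: tlen_def)

lemma tlen_tempty [simp]: "tlen (tempty E) = 0"
  by (simp add: tempty_def)

lemma tlen_tletter [simp]: "tlen (tletter E i) = 1"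
  by (simp add: tletter_def)

abbreviation endpoints :: "(nat \<times> nat) set \<Rightarrow> nat set" where
  "endpoints \<pi> \<equiv> fst ` \<pi> \<union> snd ` \<pi>"

definition pairing :: "(nat \<times> nat) set \<Rightarrow> bool" where
  "pairing \<pi> \<longleftrightarrow> finite \<pi> \<and> (\<forall>b \<in> \<pi>. fst b < snd b) \<and>
     (\<forall>b \<in> \<pi>. \<forall>c \<in> \<pi>. b \<noteq> c \<longrightarrow> {fst b, snd b} \<inter> {fst c, snd c} = {})"

definition depth :: "(nat \<times> nat) set \<Rightarrow> nat \<Rightarrow> nat" where
  "depth \<pi> k = card {b \<in> \<pi>. fst b \<le> k \<and> k < snd b}"

definition value_before :: "(nat \<Rightarrow> nat \<Rightarrow> bool) \<Rightarrow> nat set \<Rightarrow> (nat \<Rightarrow> trace) \<Rightarrow> nat \<Rightarrow> trace" where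
  "value_before E I u k = (if \<exists>j \<in> I. j < k then u (Max {j \<in> I. j < k}) else tempty E)"

lemma pairing_if_pair_partition:
  assumes "pair_partition S \<pi>" "finite S"
  shows "pairing \<pi>"
proof -
  have sub: "\<pi> \<subseteq> S \<times> S" and lt: "\<forall>b \<in> \<pi>. fst b < snd b"
    using assms(1) by (auto simp: pair_partition_def)
  have unique: "\<And>k. k \<in> S \<Longrightarrow> \<exists>!b \<in> \<pi>. k = fst b \<or> k = snd b"
    using assms(1) by (simp add: pair_partition_def)
  have "b = c" if "b \<in> \<pi>" "c \<in> \<pi>" "k \<in> {fst b, snd b}" "k \<in> {fst c, snd c}" for b c k
  proof -
    have "k \<in> S"
      using that(1,3) sub by auto
    then show ?thesis
      using that unique[of k] by blast
  qed
  then show ?thesis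
    using finite_subset[OF sub] assms(2) lt unfolding pairing_def by blast
qed

lemma pairing_subset: "pairing \<pi> \<Longrightarrow> \<sigma> \<subseteq> \<pi> \<Longrightarrow> pairing \<sigma>"
  using finite_subset unfolding pairing_def by blast

lemma pairing_endpoints_notin_Diff:
  assumes "pairing \<pi>" "(s, r) \<in> \<pi>"
  shows "s \<notin> endpoints (\<pi> - {(s, r)})" "r \<notin> endpoints (\<pi> - {(s, r)})"
  using assms by (fastforce simp: pairing_def)+

lemma depth_insert:
  assumes "finite \<sigma>" "(s, r) \<notin> \<sigma>"
  shows "depth (insert (s, r) \<sigma>) k = depth \<sigma> k + (if s \<le> k \<and> k < r then 1 else 0)"
proof -
  have "{b \<in> insert (s, r) \<sigma>. fst b \<le> k \<and> k < snd b} =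
      (if s \<le> k \<and> k < r then insert (s, r) else id) {b \<in> \<sigma>. fst b \<le> k \<and> k < snd b}"
    by auto
  then show ?thesis
    using assms by (simp add: depth_def)
qed

lemma depth_eq_0: "\<forall>b \<in> \<sigma>. k < fst b \<Longrightarrow> depth \<sigma> k = 0"
  unfolding depth_def by (metis (no_types, lifting) card.empty empty_Collect_eq not_le)

lemma depth_eq_if_no_endpoint_between:
  assumes "j \<le> k" "{j<..k} \<inter> endpoints \<sigma> = {}"
  shows "depth \<sigma> j = depth \<sigma> k"
proof -
  have "fst b \<le> j \<and> j < snd b \<longleftrightarrow> fst b \<le> k \<and> k < snd b" if "b \<in> \<sigma>" for b
  proof -
    have "fst b \<notin> {j<..k}" "snd b \<notin> {j<..k}"
      using that assms(2) by auto
    then show ?thesis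
      using assms(1) by auto
  qed
  then show ?thesis
    unfolding depth_def by (metis (no_types, lifting))
qed

lemma depth_at_opening:
  assumes "pairing \<pi>" "(s, r) \<in> \<pi>" "0 < s"
  shows "depth \<pi> s = depth \<pi> (s - 1) + 1"
proof -
  define \<sigma> where "\<sigma> = \<pi> - {(s, r)}"
  have \<pi>: "\<pi> = insert (s, r) \<sigma>" and "finite \<sigma>" "(s, r) \<notin> \<sigma>" "s < r"
    using assms by (auto simp: \<sigma>_def pairing_def)
  moreover have "{s - 1<..s} = {s}"
    using assms(3) by auto
  then have "depth \<sigma> (s - 1) = depth \<sigma> s"
    using pairing_endpoints_notin_Diff(1)[OF assms(1,2)]
    by (intro depth_eq_if_no_endpoint_between) (auto simp: \<sigma>_def)
  ultimately show ?thesis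
    using assms(3) by (simp add: depth_insert)
qed

lemma depth_at_closing:
  assumes "pairing \<pi>" "(s, r) \<in> \<pi>"
  shows "depth \<pi> (r - 1) = depth \<pi> r + 1"
proof -
  define \<sigma> where "\<sigma> = \<pi> - {(s, r)}"
  have \<pi>: "\<pi> = insert (s, r) \<sigma>" and "finite \<sigma>" "(s, r) \<notin> \<sigma>" "s < r"
    using assms by (auto simp: \<sigma>_def pairing_def)
  moreover have "{r - 1<..r} = {r}"
    using \<open>s < r\<close> by auto
  then have "depth \<sigma> (r - 1) = depth \<sigma> r"
    using pairing_endpoints_notin_Diff(2)[OF assms]
    by (intro depth_eq_if_no_endpoint_between) (auto simp: \<sigma>_def)
  ultimately show ?thesis
    by (simp add: depth_insert)
qed

lemma tlen_value_before:
  assumes "finite I" "k \<notin> I" "endpoints \<sigma> \<subseteq> I" "\<forall>j \<in> I. tlen (u j) = depth \<sigma> j"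
  shows "tlen (value_before E I u k) = depth \<sigma> k"
proof (cases "\<exists>j \<in> I. j < k")
  case True
  define j where "j = Max {j \<in> I. j < k}"
  have j: "j \<in> {j \<in> I. j < k}"
    unfolding j_def using True assms(1) by (intro Max_in) auto
  have max: "i \<le> j" if "i \<in> I" "i < k" for i
    using that assms(1) by (simp add: j_def)
  have "i \<notin> I" if "j < i" "i \<le> k" for i
    using that assms(2) max[of i] by (cases "i = k") auto
  then have "depth \<sigma> j = depth \<sigma> k"
    using j assms(3) by (intro depth_eq_if_no_endpoint_between) auto
  then show ?thesis
    using True j assms(4) by (simp add: value_before_def j_def)
next
  case False
  then have "depth \<sigma> k = 0"
    using assms(2,3) by (intro depth_eq_0) (force simp: not_less_iff_gr_or_eq)
  then show ?thesis
    using False by (simp add: value_before_def)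
qed

lemma Phi_aux_Suc_first_closing:
  fixes E :: "nat \<Rightarrow> nat \<Rightarrow> bool" and n :: nat and \<phi> :: "nat \<times> nat \<Rightarrow> nat"
  assumes "pairing \<pi>" "(s, r) \<in> \<pi>" "\<forall>b \<in> \<pi>. r \<le> snd b"
  defines "\<sigma> \<equiv> \<pi> - {(s, r)}"
  defines "u \<equiv> Phi_aux E n \<sigma> \<phi>"
  shows "Phi_aux E (Suc n) \<pi> \<phi> k =
     (if k < s then u k
      else if k = s then tmul E (tletter E (\<phi> (s, r))) (value_before E (endpoints \<sigma>) u s)
      else if k < r then tmul E (tletter E (\<phi> (s, r))) (u k)
      else if k = r then value_before E (endpoints \<sigma>) u r
      else u k)"
proof -
  have "{r. \<exists>s. (s, r) \<in> \<pi>} = snd ` \<pi>"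
    by force
  then have Min_eq: "Min {r. \<exists>s. (s, r) \<in> \<pi>} = r"
    using assms(1-3) by (intro Min_eqI) (auto simp: pairing_def)
  have "s' = s" if "(s', r) \<in> \<pi>" for s'
    using that assms(1,2) unfolding pairing_def by fastforce
  then have The_eq: "(THE s. (s, r) \<in> \<pi>) = s"
    using assms(2) by blast
  show ?thesis
    unfolding Phi_aux.simps Let_def Min_eq The_eq \<sigma>_def[symmetric] u_def[symmetric] value_before_def ..
qed

lemma tlen_Phi_aux:
  assumes "pairing \<pi>" "card \<pi> = n"
  shows "tlen (Phi_aux E n \<pi> \<phi> k) = depth \<pi> k"
  using assms
proof (induction n arbitrary: \<pi> k)
  case 0
  then have "\<pi> = {}" by (simp add: pairing_def)
  then show ?case by (simp add: depth_def)
next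
  case (Suc n)
  have "finite \<pi>" "\<pi> \<noteq> {}"
    using Suc.prems by (auto simp: pairing_def)
  then have "Min (snd ` \<pi>) \<in> snd ` \<pi>"
    by (intro Min_in) auto
  then obtain s r where sr: "(s, r) \<in> \<pi>" and first: "\<forall>b \<in> \<pi>. r \<le> snd b"
    using \<open>finite \<pi>\<close> by force
  define \<sigma> where "\<sigma> = \<pi> - {(s, r)}"
  define u where "u = Phi_aux E n \<sigma> \<phi>"
  have \<pi>: "\<pi> = insert (s, r) \<sigma>" "(s, r) \<notin> \<sigma>" and "card \<sigma> = n" "pairing \<sigma>" "finite \<sigma>" "s < r"
    using sr Suc.prems pairing_subset[of \<pi> \<sigma>] by (auto simp: \<sigma>_def pairing_def)
  then have len_u: "\<forall>j. tlen (u j) = depth \<sigma> j"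
    using Suc.IH by (simp add: u_def)
  have len_before: "tlen (value_before E (endpoints \<sigma>) u k) = depth \<sigma> k" if "k \<in> {s, r}" for k
    using that pairing_endpoints_notin_Diff[OF Suc.prems(1) sr] \<open>finite \<sigma>\<close> len_u
    by (intro tlen_value_before) (auto simp: \<sigma>_def)
  have "depth \<pi> k = depth \<sigma> k + (if s \<le> k \<and> k < r then 1 else 0)"
    using \<pi> \<open>finite \<sigma>\<close> by (simp add: depth_insert)
  then show ?case
    unfolding Phi_aux_Suc_first_closing[OF Suc.prems(1) sr first, folded \<sigma>_def]
    using len_u len_before \<open>s < r\<close> by (simp flip: u_def)
qed

theorem lemma3p1:
  fixes L p :: nat and E :: "nat \<Rightarrow> nat \<Rightarrow> bool"
    and \<pi> :: "(nat \<times> nat) set" and \<phi> :: "nat \<times> nat \<Rightarrow> nat"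
  assumes "simple_graph_on L E"
    and "p \<ge> 1"
    and "(\<pi>, \<phi>) \<in> Pi_set L E p"
    and "(s, r) \<in> \<pi>"
  shows "let W = (\<lambda>k. if k = 0 then tempty E else Phi E \<pi> \<phi> k) in
           int (tlen (W s)) = int (tlen (W (s - 1))) + 1 \<and>
           int (tlen (W r)) = int (tlen (W (r - 1))) - 1"
proof -
  have partition: "pair_partition {1..2*p} \<pi>"
    using assms(3) by (simp add: Pi_set_def)
  then have pairing: "pairing \<pi>"
    by (simp add: pairing_if_pair_partition)
  have "depth \<pi> 0 = 0" "0 < s"
    using partition assms(4) by (auto simp: pair_partition_def intro!: depth_eq_0)
  define W where "W = (\<lambda>k. if k = 0 then tempty E else Phi E \<pi> \<phi> k)"
  have len: "tlen (W k) = depth \<pi> k" for k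
    using pairing \<open>depth \<pi> 0 = 0\<close> by (simp add: W_def Phi_def tlen_Phi_aux)
  show ?thesis
    unfolding W_def[symmetric] Let_def len
    using depth_at_opening[OF pairing assms(4) \<open>0 < s\<close>] depth_at_closing[OF pairing assms(4)]
    by simp
qed

end
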